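(* Let $Smr(n)$ be the integer whose decimal expansion is the concatenation of $n+1,n,\ldots,2,1$ (so $Smr(0)=1$, $Smr(1)=21$, $Smr(2)=321$, $\ldots$). For every integer $n\geqslant 0$, put $$l=\lceil \log_{10}(n+2)\rceil,\qquad t_l=10^{l-1}-1,\qquad p_l=10^{l-1}\left(l-\frac{10}{9}\right)+l+\frac19,$$ $$\alpha_l=\frac{s_2-2\cdot 10^l s_1+10^{2l}s_0}{(10^l-1)^2},\qquad \mu_l=\frac{10^{p_l}\left(10^{2l-1}-10^{l-1}-1\right)}{(10^l-1)^2},\qquad \theta_l=\frac{10^{p_l}}{10^l-1},$$ where $s_0=Smr(t_l)$, $s_1=Smr(t_l+1)$, $s_2=Smr(t_l+2)$. Then $$Smr(n)=\alpha_l+\mu_l\,10^{l(n-t_l)}+\theta_l\,(n-t_l)\,10^{l(n-t_l)}.$$ *)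

theory Defs
  imports Complex_Main
begin

text \<open>Number of decimal digits of a natural number (with the convention that 0 has one digit).\<close>
fun ndigits :: "nat \<Rightarrow> nat" where
  "ndigits k = (if k < 10 then 1 else 1 + ndigits (k div 10))"

definition dconcat :: "nat \<Rightarrow> nat \<Rightarrow> nat" where
  "dconcat a b = a * 10 ^ ndigits b + b"

fun Smr :: "nat \<Rightarrow> nat" where
  "Smr 0 = 1"
| "Smr (Suc n) = dconcat (n + 2) (Smr n)"

end

theory Submission
  imports Defs
begin

(* Writing d n for the number of digits of Smr n, the definition reads
   Smr (n + 1) = Smr n + (n + 2) * 10 ^ d n.  While n + 2 runs through the l-digit numbers,
   d grows by exactly l per step, so x m = Smr (t_l + m) satisfies the arithmetico-geometric
   recurrence x (m + 1) = x m + (c + m) q a ^ m with a = 10 ^ l, c = 10 ^ (l - 1) + 1 and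
   q = 10 ^ d t_l, whose solution has the shape alpha + mu a ^ m + theta m a ^ m.
   The exponent p_l is d t_l, the total number of digits of 1, ..., 10 ^ (l - 1). *)

declare ndigits.simps[simp del]

lemma ndigits_pos: "0 < ndigits m"
  by (subst ndigits.simps) simp

lemma ndigits_eqI: "10 ^ k \<le> m \<Longrightarrow> m < 10 ^ Suc k \<Longrightarrow> ndigits m = Suc k"
proof (induction k arbitrary: m)
  case 0
  then show ?case by (subst ndigits.simps) simp
next
  case (Suc k)
  have "(10::nat) \<le> 10 ^ Suc k"
    by simp
  then have "10 \<le> m"
    using Suc.prems(1) by linarith
  moreover have "10 ^ k \<le> m div 10" "m div 10 < 10 ^ Suc k"
    using Suc.prems by (simp_all add: less_eq_div_iff_mult_less_eq div_less_iff_less_mult mult.commute)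
  ultimately show ?case using Suc.IH by (subst ndigits.simps) simp
qed

lemma less_power_ndigits: "m < 10 ^ ndigits m"
proof (induction m rule: ndigits.induct)
  case (1 m)
  then show ?case by (subst ndigits.simps) (auto simp: div_less_iff_less_mult mult.commute)
qed

lemma power_ndigits_le: "0 < m \<Longrightarrow> 10 ^ ndigits m \<le> 10 * m"
proof (induction m rule: ndigits.induct)
  case (1 m)
  show ?case
  proof (cases "m < 10")
    case True
    then show ?thesis using "1.prems" by (subst ndigits.simps) simp
  next
    case False
    then have "10 ^ ndigits (m div 10) \<le> 10 * (m div 10)" using 1 by simp
    also have "\<dots> \<le> m" by simp
    finally show ?thesis using False by (subst ndigits.simps) simp
  qed
qed

lemma ndigits_dconcat:
  assumes "0 < a"
  shows "ndigits (dconcat a b) = ndigits a + ndigits b"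
proof -
  define A B where "A = ndigits a" and "B = ndigits b"
  have AB: "Suc (A - 1 + B) = A + B"
    using ndigits_pos[of a] by (simp add: A_def)
  have "10 * 10 ^ (A - 1 + B) = (10::nat) ^ A * 10 ^ B"
    by (metis AB power_Suc power_add)
  also have "\<dots> \<le> 10 * (a * 10 ^ B)"
    using power_ndigits_le[OF assms] by (simp add: A_def)
  finally have lower: "10 ^ (A - 1 + B) \<le> dconcat a b"
    by (simp add: dconcat_def B_def)
  have "dconcat a b < (a + 1) * 10 ^ B"
    using less_power_ndigits[of b] by (simp add: dconcat_def B_def)
  also have "\<dots> \<le> 10 ^ A * 10 ^ B"
    using less_power_ndigits[of a] by (intro mult_right_mono) (simp_all add: A_def)
  also have "\<dots> = 10 ^ Suc (A - 1 + B)"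
    by (simp only: AB power_add)
  finally show ?thesis
    using ndigits_eqI[OF lower] AB by (simp add: A_def B_def)
qed

lemma Smr_Suc_eq: "Smr (Suc n) = Smr n + (n + 2) * 10 ^ ndigits (Smr n)"
  by (simp add: dconcat_def)

lemma ndigits_Smr_eq_sum: "ndigits (Smr n) = (\<Sum>k = 1..Suc n. ndigits k)"
  by (induction n) (simp_all add: ndigits_dconcat ndigits.simps[of 1])

lemma sum_ndigits_below_power:
  "9 * real (\<Sum>k = 1..<10 ^ j. ndigits k) = 9 * real j * 10 ^ j - 10 ^ j + 1"
proof (induction j)
  case (Suc j)
  have "(\<Sum>k = 1..<10 ^ Suc j. ndigits k)
      = (\<Sum>k = 1..<10 ^ j. ndigits k) + (\<Sum>k = 10 ^ j..<10 ^ Suc j. ndigits k)"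
    by (rule sum.atLeastLessThan_concat[symmetric]) simp_all
  also have "(\<Sum>k = 10 ^ j..<10 ^ Suc j. ndigits k) = (\<Sum>k\<in>{(10::nat) ^ j..<10 ^ Suc j}. Suc j)"
    by (rule sum.cong) (auto intro: ndigits_eqI)
  finally show ?case
    using Suc.IH by (simp add: of_nat_diff algebra_simps)
qed simp

lemma ndigits_Smr_pred_power:
  assumes "Suc t = 10 ^ k"
  shows "real (ndigits (Smr t)) = 10 ^ k * (real k + 1 - 10 / 9) + real k + 1 + 1 / 9"
proof -
  have "{1..Suc t} = insert (10 ^ k) {1..<10 ^ k}"
    using assms by auto
  then have "ndigits (Smr t) = (\<Sum>k = 1..<10 ^ k. ndigits k) + Suc k"
    using ndigits_eqI[of k "10 ^ k"] by (simp add: ndigits_Smr_eq_sum)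
  then show ?thesis
    using sum_ndigits_below_power[of k] by (simp add: field_simps)
qed

lemma ndigits_Smr_add:
  assumes "10 ^ k \<le> t + 2" "t + m + 1 < 10 ^ Suc k"
  shows "ndigits (Smr (t + m)) = ndigits (Smr t) + Suc k * m"
  using assms(2)
proof (induction m)
  case (Suc m)
  then have "ndigits (t + m + 2) = Suc k"
    using assms(1) by (intro ndigits_eqI) simp_all
  then show ?case
    using Suc by (simp add: ndigits_dconcat)
qed simp

lemma Smr_Suc_in_block:
  assumes "10 ^ k \<le> t + 2" "t + j + 1 < 10 ^ Suc k"
  shows "real (Smr (t + Suc j))
    = real (Smr (t + j)) + (real t + 2 + real j) * 10 ^ ndigits (Smr t) * (10 ^ Suc k) ^ j"
proof -
  have "(10::nat) ^ ndigits (Smr (t + j)) = 10 ^ ndigits (Smr t) * (10 ^ Suc k) ^ j"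
    by (simp add: ndigits_Smr_add[OF assms] power_add power_mult)
  then have "real (10 ^ ndigits (Smr (t + j))) = 10 ^ ndigits (Smr t) * (10 ^ Suc k) ^ j"
    by (simp only: of_nat_mult of_nat_power of_nat_numeral)
  then show ?thesis
    using Smr_Suc_eq[of "t + j"] by (simp add: algebra_simps)
qed

lemma arith_geom_recurrence_solution:
  fixes x :: "nat \<Rightarrow> 'a::field"
  assumes "a \<noteq> 1"
    and step: "\<And>j. j < m \<Longrightarrow> x (Suc j) = x j + (c + of_nat j) * q * a ^ j"
  defines "\<mu> \<equiv> q * (c * (a - 1) - a) / (a - 1) ^ 2" and "\<theta> \<equiv> q / (a - 1)"
  shows "x m = x 0 - \<mu> + \<mu> * a ^ m + \<theta> * of_nat m * a ^ m"
  using step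
proof (induction m)
  case (Suc m)
  have a: "a - 1 \<noteq> 0"
    using assms(1) by simp
  then have "\<mu> * (a - 1) = q * (c * (a - 1) - a) / (a - 1)"
    by (simp add: \<mu>_def power2_eq_square)
  with a have key: "\<mu> * (a - 1) + \<theta> * (of_nat m * (a - 1) + a) = (c + of_nat m) * q"
    by (simp add: \<theta>_def field_simps)
  have "x (Suc m) = x m + (c + of_nat m) * q * a ^ m"
    using Suc.prems by simp
  also have "\<dots> = x 0 - \<mu> + \<mu> * a ^ m + \<theta> * of_nat m * a ^ m
      + (\<mu> * (a - 1) + \<theta> * (of_nat m * (a - 1) + a)) * a ^ m"
    using Suc by (simp add: key)
  also have "\<dots> = x 0 - \<mu> + \<mu> * a ^ Suc m + \<theta> * of_nat (Suc m) * a ^ Suc m"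
    by (simp add: algebra_simps)
  finally show ?case .
qed simp

lemma arith_geom_recurrence_closed_form:
  fixes x :: "nat \<Rightarrow> 'a::field"
  assumes "a \<noteq> 1" "2 \<le> N" "m \<le> N"
    and step: "\<And>j. j < N \<Longrightarrow> x (Suc j) = x j + (c + of_nat j) * q * a ^ j"
  shows "x m = (x 2 - 2 * a * x 1 + a ^ 2 * x 0) / (a - 1) ^ 2
    + q * (c * (a - 1) - a) / (a - 1) ^ 2 * a ^ m + q / (a - 1) * of_nat m * a ^ m"
proof -
  have "x 1 = x 0 + c * q" "x 2 = x 1 + (c + 1) * q * a"
    using step[of 0] step[of 1] assms(2) by (simp_all add: numeral_2_eq_2)
  then have "x 2 - 2 * a * x 1 + a ^ 2 * x 0 = x 0 * (a - 1) ^ 2 - q * (c * (a - 1) - a)"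
    by (simp add: power2_eq_square algebra_simps)
  then have "(x 2 - 2 * a * x 1 + a ^ 2 * x 0) / (a - 1) ^ 2
      = x 0 - q * (c * (a - 1) - a) / (a - 1) ^ 2"
    using assms(1) by (simp add: diff_divide_distrib)
  then show ?thesis
    using arith_geom_recurrence_solution[OF assms(1), of m x c q] step assms(3) by simp
qed

lemma ceiling_log10_eq:
  assumes "1 < m"
  obtains k :: nat where "\<lceil>log 10 (real m)\<rceil> = int k + 1" "10 ^ k < m" "m \<le> 10 ^ Suc k"
proof -
  have "0 < log 10 (real m)"
    using assms by simp
  then have "0 \<le> \<lceil>log 10 (real m)\<rceil> - 1"
    by linarith
  then obtain k where "\<lceil>log 10 (real m)\<rceil> - 1 = int k"
    using nonneg_int_cases by metis
  then have "\<lceil>log 10 (real m)\<rceil> = int k + 1"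
    by simp
  then show ?thesis
    using ceiling_log_nat_eq_powr_iff[of 10 m k] assms that by simp
qed

lemma Smr_closed_form_in_block:
  assumes t_Suc: "Suc t = 10 ^ k" and "t \<le> n" "n + 2 \<le> 10 ^ Suc k"
  defines "a \<equiv> (10::real) ^ Suc k" and "q \<equiv> (10::real) ^ ndigits (Smr t)"
  shows "real (Smr n)
    = (real (Smr (t + 2)) - 2 * a * real (Smr (t + 1)) + a ^ 2 * real (Smr t)) / (a - 1) ^ 2
    + q * (a ^ 2 / 10 - a / 10 - 1) / (a - 1) ^ 2 * a ^ (n - t) + q / (a - 1) * real (n - t) * a ^ (n - t)"
proof -
  have c: "real t + 2 = a / 10 + 1"
    using arg_cong[OF t_Suc, of real] by (simp add: a_def)
  have "1 < a"
    unfolding a_def by (rule one_less_power) simp_all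
  then have a: "a \<noteq> 1"
    by simp
  define N where "N = 10 ^ Suc k - Suc t"
  have "2 \<le> N" "n - t \<le> N"
    using assms(3) t_Suc by (simp_all add: N_def)
  moreover have "real (Smr (t + Suc j)) = real (Smr (t + j)) + (a / 10 + 1 + real j) * q * a ^ j"
    if "j < N" for j
    using Smr_Suc_in_block[of k t j] that t_Suc c by (simp add: N_def a_def q_def)
  ultimately have "real (Smr (t + (n - t)))
    = (real (Smr (t + 2)) - 2 * a * real (Smr (t + 1)) + a ^ 2 * real (Smr t)) / (a - 1) ^ 2
    + q * ((a / 10 + 1) * (a - 1) - a) / (a - 1) ^ 2 * a ^ (n - t) + q / (a - 1) * real (n - t) * a ^ (n - t)"
    using arith_geom_recurrence_closed_form[OF a, of N "n - t" "\<lambda>j. real (Smr (t + j))"] by simp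
  moreover have "(a / 10 + 1) * (a - 1) - a = a ^ 2 / 10 - a / 10 - 1"
    by (simp add: power2_eq_square field_simps)
  ultimately show ?thesis
    using assms(2) by simp
qed

theorem corollary2:
  fixes n :: nat and l :: int and t :: nat
    and p \<alpha> \<mu> \<theta> s0 s1 s2 :: real
  assumes "l = \<lceil>log 10 (real n + 2)\<rceil>"
    and "t = 10 ^ nat (l - 1) - 1"
    and "p = 10 powr (real_of_int l - 1) * (real_of_int l - 10 / 9) + real_of_int l + 1 / 9"
    and "s0 = real (Smr t)" and "s1 = real (Smr (t + 1))" and "s2 = real (Smr (t + 2))"
    and "\<alpha> = (s2 - 2 * 10 powr (real_of_int l) * s1 + 10 powr (2 * real_of_int l) * s0)
              / (10 powr (real_of_int l) - 1) ^ 2"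
    and "\<mu> = 10 powr p * (10 powr (2 * real_of_int l - 1) - 10 powr (real_of_int l - 1) - 1)
              / (10 powr (real_of_int l) - 1) ^ 2"
    and "\<theta> = 10 powr p / (10 powr (real_of_int l) - 1)"
  shows "real (Smr n) = \<alpha> + \<mu> * 10 powr (real_of_int l * (real n - real t))
           + \<theta> * (real n - real t) * 10 powr (real_of_int l * (real n - real t))"
proof -
  obtain k where "\<lceil>log 10 (real (n + 2))\<rceil> = int k + 1"
    and bounds: "10 ^ k < n + 2" "n + 2 \<le> 10 ^ Suc k"
    by (rule ceiling_log10_eq[of "n + 2"]) auto
  then have l: "l = int k + 1"
    using assms(1) by (simp add: add.commute)
  have t: "Suc t = 10 ^ k" and t_le: "t \<le> n"
    using assms(2) l bounds(1) by simp_all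
  define a where "a = (10::real) ^ Suc k"
  have pow: "10 powr real j = (10::real) ^ j" for j
    by (simp add: powr_realpow)
  have exps: "real_of_int l = real (Suc k)" "2 * real_of_int l = real (Suc k * 2)"
    "real_of_int l * (real n - real t) = real (Suc k * (n - t))"
    using l t_le by (simp_all add: of_nat_diff) (simp add: algebra_simps)
  have powers: "10 powr real_of_int l = a" "10 powr (2 * real_of_int l) = a ^ 2"
    "10 powr (real_of_int l * (real n - real t)) = a ^ (n - t)"
    \<comment> \<open>exps(1) goes last: it would otherwise rewrite inside the other exponents\<close>
    unfolding exps(2,3) unfolding exps(1) pow a_def by (simp_all add: power_mult power_add)
  then have "10 powr (real_of_int l - 1) = 10 ^ k"
    by (simp add: powr_diff a_def)
  then have p: "p = real (ndigits (Smr t))"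
    using ndigits_Smr_pred_power[OF t] assms(3) l by (simp add: algebra_simps)
  show ?thesis
    using Smr_closed_form_in_block[OF t t_le bounds(2)] assms(4-9) p pow powers t_le
    by (simp add: powr_diff a_def)
qed

end
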